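(* Let $n>1$, $t,p\ge 1$ be integers, let $G$ be a regular graph of order $m$, and suppose $tpm>1$. If $n\equiv 0\pmod 2$, or $ntpm\equiv 1\pmod 2$, or $tpG$ is distance magic, then $tH_{n,p}\otimes G$ is distance magic.
   Context: A graph $G$ on $v$ vertices is distance magic if there is a bijection $f:V(G)\to\{1,\ldots,v\}$ and a constant $k$ such that for every vertex $x$, $\sum_{y\in N(x)}f(y)=k$, where $N(x)$ is the set of neighbours of $x$. $H_{n,p}$ denotes the complete multipartite graph with $p$ partite sets each of size $n$; $cH$ denotes the disjoint union of $c$ copies of $H$. The Kronecker (tensor) product $G\otimes H$ has vertex set $V(G)\times V(H)$, with $(g,h)\sim(g',h')$ iff $gg'\in E(G)$ and $hh'\in E(H)$. *)

theory Defs
  imports Main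
begin

definition simple_graph :: "'v set \<Rightarrow> ('v \<Rightarrow> 'v \<Rightarrow> bool) \<Rightarrow> bool" where
  "simple_graph V E \<longleftrightarrow> finite V \<and> (\<forall>x\<in>V. \<forall>y\<in>V. E x y \<longrightarrow> E y x) \<and> (\<forall>x\<in>V. \<not> E x x)"

definition nbhd :: "'v set \<Rightarrow> ('v \<Rightarrow> 'v \<Rightarrow> bool) \<Rightarrow> 'v \<Rightarrow> 'v set" where
  "nbhd V E x = {y\<in>V. E x y}"

definition regular_graph :: "'v set \<Rightarrow> ('v \<Rightarrow> 'v \<Rightarrow> bool) \<Rightarrow> bool" where
  "regular_graph V E \<longleftrightarrow> simple_graph V E \<and> (\<exists>r. \<forall>x\<in>V. card (nbhd V E x) = r)"

definition distance_magic :: "'v set \<Rightarrow> ('v \<Rightarrow> 'v \<Rightarrow> bool) \<Rightarrow> bool" where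
  "distance_magic V E \<longleftrightarrow>
     (\<exists>(f :: 'v \<Rightarrow> nat) k. bij_betw f V {1..card V} \<and> (\<forall>x\<in>V. (\<Sum>y\<in>nbhd V E x. f y) = k))"

definition copies_verts :: "nat \<Rightarrow> 'v set \<Rightarrow> (nat \<times> 'v) set" where
  "copies_verts c V = {0..<c} \<times> V"

definition copies_adj :: "('v \<Rightarrow> 'v \<Rightarrow> bool) \<Rightarrow> nat \<times> 'v \<Rightarrow> nat \<times> 'v \<Rightarrow> bool" where
  "copies_adj E u w \<longleftrightarrow> fst u = fst w \<and> E (snd u) (snd w)"

text \<open>Complete multipartite graph H_{n,p}: vertices (i,a), i < n the position within
  part a < p; (i,a) ~ (j,b) iff a \<noteq> b.\<close>
definition H_verts :: "nat \<Rightarrow> nat \<Rightarrow> (nat \<times> nat) set" where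
  "H_verts n p = {0..<n} \<times> {0..<p}"

definition H_adj :: "nat \<times> nat \<Rightarrow> nat \<times> nat \<Rightarrow> bool" where
  "H_adj u w \<longleftrightarrow> snd u \<noteq> snd w"

definition kron_verts :: "'a set \<Rightarrow> 'b set \<Rightarrow> ('a \<times> 'b) set" where
  "kron_verts V W = V \<times> W"

definition kron_adj :: "('a \<Rightarrow> 'a \<Rightarrow> bool) \<Rightarrow> ('b \<Rightarrow> 'b \<Rightarrow> bool) \<Rightarrow> 'a \<times> 'b \<Rightarrow> 'a \<times> 'b \<Rightarrow> bool" where
  "kron_adj E F u w \<longleftrightarrow> E (fst u) (fst w) \<and> F (snd u) (snd w)"

end

theory Submission imports Defs begin

(* Give the vertex ((c, (j, b)), w) of t H_{n,p} (x) G (copy c, position j in part b, vertex w)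
   the entry in row j and column \<pi> ((c, b), w) of an n x q array filled with 1..nq, where
   q = tpm and \<pi> is a bijection onto the columns. A vertex in part a of copy c is adjacent
   to all positions of all parts b \<noteq> a of copy c, paired with the G-neighbours w' of w, so its
   weight is the sum over such b and w' of the column sums at \<pi> ((c, b), w'). If all column
   sums are equal (possible for n even by adding complementary pairs of rows, and for n, q odd
   starting from a 3-row array) any \<pi> works. For odd n, columns can sum to x + 1 plus a
   constant, and \<pi> is read off a distance magic labelling of tpG. *)

lemma bij_betw_if_inj_on_card:
  assumes "inj_on f A" "f ` A \<subseteq> B" "finite B" "card A = card B"
  shows "bij_betw f A B"
  by (metis assms bij_betw_def card_image card_subset_eq)

(* Column sums are prescribed only up to an additive constant, which the regularity of G
   turns into a constant again. *)
definition labelling_with_column_sums :: "nat \<Rightarrow> nat \<Rightarrow> (nat \<Rightarrow> nat) \<Rightarrow> bool" where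
  "labelling_with_column_sums n q \<sigma> \<longleftrightarrow>
     (\<exists>F C. bij_betw (\<lambda>(j, x). F j x) ({0..<n} \<times> {0..<q}) {1..n * q} \<and>
            (\<forall>x<q. (\<Sum>j<n. F j x) = \<sigma> x + C))"

lemma labelling_with_column_sums_0: "labelling_with_column_sums 0 q (\<lambda>_. 0)"
  unfolding labelling_with_column_sums_def by (auto simp: bij_betw_def)

lemma labelling_with_column_sums_1: "labelling_with_column_sums 1 q Suc"
proof -
  have "bij_betw (\<lambda>(j::nat, x). Suc x) ({0..<1} \<times> {0..<q}) {1..1 * q}"
    by (rule bij_betw_if_inj_on_card) (auto simp: inj_on_def card_cartesian_product)
  then show ?thesis
    unfolding labelling_with_column_sums_def by (intro exI[of _ "\<lambda>_ x. Suc x"] exI[of _ 0]) simp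
qed

(* For q = 2h + 1: the middle row is the first shifted cyclically by h + 1, and the last row
   takes the odd values below 2h for x < h and the even ones otherwise, so that every column
   sums to 9h + 6. *)
definition three_row :: "nat \<Rightarrow> nat \<Rightarrow> nat \<Rightarrow> nat" where
  "three_row h j x =
     (if j = 0 then x + 1
      else if j = 1 then 2*h + 2 + (if x < h then x + h + 1 else x - h)
      else 4*h + 3 + (if x < h then 2*h - 1 - 2*x else 4*h - 2*x))"

lemma labelling_with_column_sums_3:
  assumes "odd q"
  shows "labelling_with_column_sums 3 q (\<lambda>_. 0)"
proof -
  obtain h where q: "q = 2*h + 1" using assms oddE by blast
  have "bij_betw (\<lambda>(j, x). three_row h j x) ({0..<3} \<times> {0..<q}) {1..3 * q}"
  proof (rule bij_betw_if_inj_on_card)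
    show "inj_on (\<lambda>(j, x). three_row h j x) ({0..<3} \<times> {0..<q})"
      unfolding q inj_on_def three_row_def by (auto split: if_splits; presburger)
    show "(\<lambda>(j, x). three_row h j x) ` ({0..<3} \<times> {0..<q}) \<subseteq> {1..3 * q}"
      unfolding q three_row_def by (auto split: if_splits)
  qed (auto simp: card_cartesian_product)
  moreover have "\<forall>x<q. (\<Sum>j<3. three_row h j x) = 0 + (9*h + 6)"
    by (simp add: q numeral_3_eq_3 three_row_def)
  ultimately show ?thesis
    unfolding labelling_with_column_sums_def by blast
qed

lemma labelling_with_column_sums_add_two_rows:
  assumes "labelling_with_column_sums s q \<sigma>"
  shows "labelling_with_column_sums (s + 2) q \<sigma>"
proof -
  obtain F C where F: "bij_betw (\<lambda>(j, x). F j x) ({0..<s} \<times> {0..<q}) {1..s * q}"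
    and C: "\<forall>x<q. (\<Sum>j<s. F j x) = \<sigma> x + C"
    using assms unfolding labelling_with_column_sums_def by blast
  define F' where "F' j x = (if j < s then F j x else if j = s then s*q + x + 1 else (s + 2)*q - x)"
    for j x
  have F_range: "F j x \<in> {1..s * q}" if "j < s" "x < q" for j x
    using bij_betwE[OF F] that by auto
  have "bij_betw (\<lambda>(j, x). F' j x) ({0..<s + 2} \<times> {0..<q}) {1..(s + 2) * q}"
  proof (rule bij_betw_if_inj_on_card)
    have "j = j' \<and> x = x'"
      if "j < s + 2" "x < q" "j' < s + 2" "x' < q" "F' j x = F' j' x'" for j x j' x'
    proof (cases "j < s \<and> j' < s")
      case True
      then have "F j x = F j' x'" using that by (simp add: F'_def)
      then show ?thesis
        using inj_onD[OF bij_betw_imp_inj_on[OF F], of "(j, x)" "(j', x')"] True that by auto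
    next
      case False
      then show ?thesis
        using that F_range[of j x] F_range[of j' x'] by (auto simp: F'_def split: if_splits)
    qed
    then show "inj_on (\<lambda>(j, x). F' j x) ({0..<s + 2} \<times> {0..<q})"
      unfolding inj_on_def by auto
    have "F' j x \<in> {1..(s + 2) * q}" if "j < s + 2" "x < q" for j x
      using that F_range[of j x] by (auto simp: F'_def)
    then show "(\<lambda>(j, x). F' j x) ` ({0..<s + 2} \<times> {0..<q}) \<subseteq> {1..(s + 2) * q}"
      by auto
  qed (simp_all add: card_cartesian_product)
  moreover have "\<forall>x<q. (\<Sum>j<s + 2. F' j x) = \<sigma> x + (C + 2*s*q + 2*q + 1)"
    using C by (simp add: F'_def)
  ultimately show ?thesis
    unfolding labelling_with_column_sums_def by blast
qed

lemma labelling_with_column_sums_add_rows: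
  assumes "labelling_with_column_sums s q \<sigma>"
  shows "labelling_with_column_sums (s + 2 * h) q \<sigma>"
proof (induction h)
  case (Suc h)
  then show ?case
    using labelling_with_column_sums_add_two_rows[of "s + 2 * h"] by (simp add: add.assoc)
qed (simp add: assms)

lemma labelling_with_column_sums_const:
  assumes "even n \<or> odd q \<and> odd n \<and> n > 1"
  shows "labelling_with_column_sums n q (\<lambda>_. 0)"
  using assms
proof
  assume "even n"
  then obtain h where "n = 0 + 2 * h" by auto
  then show ?thesis
    using labelling_with_column_sums_add_rows[OF labelling_with_column_sums_0] by simp
next
  assume odd_q_n: "odd q \<and> odd n \<and> n > 1"
  then obtain k where "n = 2 * k + 1" using oddE by blast
  with odd_q_n have "n = 3 + 2 * (k - 1)" by (cases k) simp_all
  with odd_q_n show ?thesis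
    using labelling_with_column_sums_add_rows[OF labelling_with_column_sums_3] by simp
qed

lemma labelling_with_column_sums_Suc:
  assumes "odd n"
  shows "labelling_with_column_sums n q Suc"
proof -
  obtain h where "n = 1 + 2 * h" using assms oddE by (metis add.commute)
  then show ?thesis
    using labelling_with_column_sums_add_rows[OF labelling_with_column_sums_1] by simp
qed

lemma nbhd_copies:
  assumes "d < c"
  shows "nbhd (copies_verts c V) (copies_adj E) (d, v) = Pair d ` nbhd V E v"
  using assms unfolding nbhd_def copies_verts_def copies_adj_def by auto

lemma nbhd_kron_copies_multipartite:
  assumes "c < t"
  shows "nbhd (kron_verts (copies_verts t (H_verts n p)) V) (kron_adj (copies_adj H_adj) E)
           ((c, (i, a)), v)
         = (\<lambda>(b, w, j). ((c, (j, b)), w)) ` (({0..<p} - {a}) \<times> nbhd V E v \<times> {..<n})"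
  using assms
  unfolding nbhd_def kron_verts_def kron_adj_def copies_verts_def copies_adj_def
    H_verts_def H_adj_def
  by (auto simp: image_iff)

lemma distance_magic_kron_copies_multipartite:
  fixes \<pi> :: "(nat \<times> nat) \<times> 'v \<Rightarrow> nat"
  assumes V: "finite V" and deg: "\<forall>v\<in>V. card (nbhd V E v) = r"
    and \<pi>: "bij_betw \<pi> (({0..<t} \<times> {0..<p}) \<times> V) {0..<q}"
    and \<sigma>: "labelling_with_column_sums n q \<sigma>"
    and K: "\<And>c b v. c < t \<Longrightarrow> b < p \<Longrightarrow> v \<in> V \<Longrightarrow> (\<Sum>w\<in>nbhd V E v. \<sigma> (\<pi> ((c, b), w))) = K"
  shows "distance_magic (kron_verts (copies_verts t (H_verts n p)) V)
                        (kron_adj (copies_adj H_adj) E)"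
proof -
  obtain F C where F: "bij_betw (\<lambda>(j, x). F j x) ({0..<n} \<times> {0..<q}) {1..n * q}"
    and C: "\<forall>x<q. (\<Sum>j<n. F j x) = \<sigma> x + C"
    using \<sigma> unfolding labelling_with_column_sums_def by blast
  define W where "W = kron_verts (copies_verts t (H_verts n p)) V"
  have W: "W = ({0..<t} \<times> {0..<n} \<times> {0..<p}) \<times> V"
    unfolding W_def kron_verts_def copies_verts_def H_verts_def by simp
  define \<psi> where "\<psi> = (\<lambda>((c, (j::nat, b)), w). (j, \<pi> ((c, b), w)))"
  have "bij_betw (\<lambda>((c, (j, b)), w). (j, ((c, b), w))) W
          ({0..<n} \<times> ({0..<t} \<times> {0..<p}) \<times> V)"
    by (rule bij_betw_byWitness[where f' = "\<lambda>(j, ((c, b), w)). ((c, (j, b)), w)"])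
      (auto simp: W)
  from bij_betw_trans[OF this bij_betw_map_prod[OF bij_betw_id \<pi>]]
  have "bij_betw \<psi> W ({0..<n} \<times> {0..<q})"
    by (simp add: \<psi>_def o_def case_prod_unfold)
  then have f: "bij_betw ((\<lambda>(j, x). F j x) \<circ> \<psi>) W {1..card W}"
    using F bij_betw_trans bij_betw_same_card by fastforce
  have "(\<Sum>y\<in>nbhd W (kron_adj (copies_adj H_adj) E) u. ((\<lambda>(j, x). F j x) \<circ> \<psi>) y)
          = (p - 1) * (K + r * C)" if "u \<in> W" for u
  proof -
    obtain c i a v where u: "u = ((c, (i, a)), v)" by (metis prod.exhaust)
    have c: "c < t" and a: "a < p" and v: "v \<in> V" using that u W by auto
    define P where "P = {0..<p} - {a}"
    have column: "(\<Sum>j<n. F j (\<pi> ((c, b), w))) = \<sigma> (\<pi> ((c, b), w)) + C"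
      if "b \<in> P" "w \<in> nbhd V E v" for b w
      using C bij_betwE[OF \<pi>] that c unfolding P_def nbhd_def by auto
    have "inj_on (\<lambda>(b, w, j). ((c, (j, b)), w)) (P \<times> nbhd V E v \<times> {..<n})"
      by (auto simp: inj_on_def)
    then have "(\<Sum>y\<in>nbhd W (kron_adj (copies_adj H_adj) E) u. ((\<lambda>(j, x). F j x) \<circ> \<psi>) y)
        = (\<Sum>(b, w, j)\<in>P \<times> nbhd V E v \<times> {..<n}. F j (\<pi> ((c, b), w)))"
      unfolding W_def u nbhd_kron_copies_multipartite[OF c] P_def[symmetric]
      by (simp add: sum.reindex \<psi>_def case_prod_unfold)
    also have "\<dots> = (\<Sum>b\<in>P. \<Sum>w\<in>nbhd V E v. \<Sum>j<n. F j (\<pi> ((c, b), w)))"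
      by (simp add: sum.cartesian_product case_prod_unfold)
    also have "\<dots> = (\<Sum>b\<in>P. \<Sum>w\<in>nbhd V E v. \<sigma> (\<pi> ((c, b), w)) + C)"
      using column by simp
    also have "\<dots> = (\<Sum>b\<in>P. K + r * C)"
      using K c v deg unfolding P_def by (simp add: sum.distrib)
    also have "\<dots> = (p - 1) * (K + r * C)"
      using a unfolding P_def by simp
    finally show ?thesis .
  qed
  with f show ?thesis
    unfolding distance_magic_def W_def by blast
qed

lemma regular_graphE:
  assumes "regular_graph V E"
  obtains r where "finite V" "\<forall>v\<in>V. card (nbhd V E v) = r"
  using assms unfolding regular_graph_def simple_graph_def by blast

lemma distance_magic_kron_copies_multipartite_const:
  assumes "regular_graph V E"
    and "labelling_with_column_sums n (t * p * card V) (\<lambda>_. 0)"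
  shows "distance_magic (kron_verts (copies_verts t (H_verts n p)) V)
                        (kron_adj (copies_adj H_adj) E)"
proof -
  obtain r where V: "finite V" and deg: "\<forall>v\<in>V. card (nbhd V E v) = r"
    using assms(1) by (rule regular_graphE)
  have "card (({0..<t} \<times> {0..<p}) \<times> V) = t * p * card V"
    by (simp add: card_cartesian_product)
  with ex_bij_betw_finite_nat[of "({0..<t} \<times> {0..<p}) \<times> V"] V
  obtain \<pi> where "bij_betw \<pi> (({0..<t} \<times> {0..<p}) \<times> V) {0..<t * p * card V}"
    by auto
  from distance_magic_kron_copies_multipartite[OF V deg this assms(2), of 0] show ?thesis
    by simp
qed

lemma distance_magic_kron_copies_multipartite_of_copies:
  assumes "regular_graph V E" and "odd n"
    and "distance_magic (copies_verts (t * p) V) (copies_adj E)"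
  shows "distance_magic (kron_verts (copies_verts t (H_verts n p)) V)
                        (kron_adj (copies_adj H_adj) E)"
proof -
  obtain r where V: "finite V" and deg: "\<forall>v\<in>V. card (nbhd V E v) = r"
    using assms(1) by (rule regular_graphE)
  define q where "q = t * p * card V"
  obtain g :: "nat \<times> 'a \<Rightarrow> nat" and k where g: "bij_betw g ({0..<t * p} \<times> V) {1..q}"
    and magic: "\<forall>u\<in>copies_verts (t * p) V.
                  (\<Sum>y\<in>nbhd (copies_verts (t * p) V) (copies_adj E) u. g y) = k"
    using assms(3) unfolding distance_magic_def copies_verts_def q_def
    by (auto simp: card_cartesian_product)
  obtain \<delta> where \<delta>: "bij_betw \<delta> ({0..<t} \<times> {0..<p}) {0..<t * p}"
    using ex_bij_betw_finite_nat[of "{0..<t} \<times> {0..<p}"] by auto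
  define \<pi> where "\<pi> = (\<lambda>y. y - 1) \<circ> g \<circ> map_prod \<delta> id"
  have "bij_betw (\<lambda>y. y - 1) {1..q} {0..<q}"
    by (rule bij_betw_byWitness[where f' = Suc]) auto
  from bij_betw_trans[OF bij_betw_map_prod[OF \<delta> bij_betw_id] bij_betw_trans[OF g this]]
  have \<pi>_bij: "bij_betw \<pi> (({0..<t} \<times> {0..<p}) \<times> V) {0..<q}"
    unfolding \<pi>_def .
  have "(\<Sum>w\<in>nbhd V E v. Suc (\<pi> ((c, b), w))) = k" if "c < t" "b < p" "v \<in> V" for c b v
  proof -
    have d: "\<delta> (c, b) < t * p" using bij_betwE[OF \<delta>] that by auto
    have "Suc (g (\<delta> (c, b), w) - 1) = g (\<delta> (c, b), w)" if "w \<in> V" for w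
      using bij_betw_apply[OF g, of "(\<delta> (c, b), w)"] d that by auto
    then have "(\<Sum>w\<in>nbhd V E v. Suc (\<pi> ((c, b), w))) = (\<Sum>w\<in>nbhd V E v. g (\<delta> (c, b), w))"
      unfolding \<pi>_def nbhd_def by (intro sum.cong refl) auto
    also have "\<dots> = (\<Sum>y\<in>nbhd (copies_verts (t * p) V) (copies_adj E) (\<delta> (c, b), v). g y)"
      unfolding nbhd_copies[OF d] by (subst sum.reindex) (auto simp: inj_on_def)
    also have "\<dots> = k"
      using magic d that(3) unfolding copies_verts_def by auto
    finally show ?thesis .
  qed
  with distance_magic_kron_copies_multipartite[OF V deg \<pi>_bij]
    labelling_with_column_sums_Suc[OF assms(2)]
  show ?thesis by blast
qed

theorem corollary2:
  fixes n t p m :: nat and V :: "'v set" and E :: "'v \<Rightarrow> 'v \<Rightarrow> bool"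
  assumes "n > 1" and "t \<ge> 1" and "p \<ge> 1"
    and "regular_graph V E" and "card V = m"
    and "t * p * m > 1"
    and "even n \<or> odd (n * t * p * m) \<or> distance_magic (copies_verts (t * p) V) (copies_adj E)"
  shows "distance_magic (kron_verts (copies_verts t (H_verts n p)) V)
                        (kron_adj (copies_adj H_adj) E)"
proof -
  have "odd (n * t * p * m) \<longleftrightarrow> odd n \<and> odd (t * p * card V)"
    using assms(5) by (simp add: mult.assoc)
  then consider "even n \<or> odd (t * p * card V) \<and> odd n \<and> n > 1"
    | "odd n" "distance_magic (copies_verts (t * p) V) (copies_adj E)"
    using assms(1,7) by blast
  then show ?thesis
  proof cases
    case 1
    with assms(4) show ?thesis
      by (intro distance_magic_kron_copies_multipartite_const labelling_with_column_sums_const)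
  next
    case 2
    with assms(4) show ?thesis
      by (intro distance_magic_kron_copies_multipartite_of_copies)
  qed
qed

end
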